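(* Let $d\ge2$, $n\ge1$, and let $H$ be a Hermitian operator on $(\mathbb{C}^d)^{\otimes n}$ acting nontrivially only on a $k$-qudit subsystem. Then for every $t\in\mathbb{R}$, the unitary $U_t=e^{-itH}$ satisfies $\mathrm{CiS}[U_t]\le k$.
   Context: Let $V=\mathbb{Z}_d\times\mathbb{Z}_d$; for $a=(s,t)\in V$, $P_a=X^sZ^t$ with $X|j\rangle=|j+1\bmod d\rangle$, $Z|j\rangle=e^{2\pi ij/d}|j\rangle$; $P_{\vec a}=\bigotimes_iP_{a_i}$, $|\vec a|=\#\{i:a_i\ne(0,0)\}$. $\|A\|_2=(d^{-n}\mathrm{Tr}(A^\dagger A))^{1/2}$. For $\|O\|_2=1$, $P_O[\vec a]=d^{-2n}|\mathrm{Tr}(OP_{\vec a})|^2$, $I[O]=\sum_{\vec a}|\vec a|P_O[\vec a]$, and $\mathrm{CiS}[U]=\max_{\|O\|_2=1}|I[UOU^\dagger]-I[O]|$. *)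

theory Defs
  imports Complex_Main
begin

text \<open>A computational basis state of
  (C^d)^{\<otimes>n} is a digit string j :: nat \<Rightarrow> nat with j i < d for i < n
  and j i = 0 for i \<ge> n.  Operators are complex matrices indexed by basis
  states; only entries on basis states matter.\<close>

type_synonym qop = "(nat \<Rightarrow> nat) \<Rightarrow> (nat \<Rightarrow> nat) \<Rightarrow> complex"

definition basis :: "nat \<Rightarrow> nat \<Rightarrow> (nat \<Rightarrow> nat) set" where
  "basis d n = {j. (\<forall>i<n. j i < d) \<and> (\<forall>i\<ge>n. j i = 0)}"

definition mmul :: "nat \<Rightarrow> nat \<Rightarrow> qop \<Rightarrow> qop \<Rightarrow> qop" where
  "mmul d n A B = (\<lambda>k j. \<Sum>l\<in>basis d n. A k l * B l j)"

definition adj :: "qop \<Rightarrow> qop" where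
  "adj A = (\<lambda>k j. cnj (A j k))"

definition idop :: qop where
  "idop = (\<lambda>k j. if k = j then 1 else 0)"

definition tr :: "nat \<Rightarrow> nat \<Rightarrow> qop \<Rightarrow> complex" where
  "tr d n A = (\<Sum>j\<in>basis d n. A j j)"

fun mpow :: "nat \<Rightarrow> nat \<Rightarrow> qop \<Rightarrow> nat \<Rightarrow> qop" where
  "mpow d n A 0 = idop"
| "mpow d n A (Suc m) = mmul d n A (mpow d n A m)"

definition mexp :: "nat \<Rightarrow> nat \<Rightarrow> qop \<Rightarrow> qop" where
  "mexp d n A = (\<lambda>k j. \<Sum>m. mpow d n A m k j / of_nat (fact m))"

definition evol :: "nat \<Rightarrow> nat \<Rightarrow> qop \<Rightarrow> real \<Rightarrow> qop" where
  "evol d n H t = mexp d n (\<lambda>k j. - (\<i> * complex_of_real t) * H k j)"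

definition hermitian :: "nat \<Rightarrow> nat \<Rightarrow> qop \<Rightarrow> bool" where
  "hermitian d n H \<longleftrightarrow> (\<forall>k\<in>basis d n. \<forall>j\<in>basis d n. H k j = cnj (H j k))"

definition norm2 :: "nat \<Rightarrow> nat \<Rightarrow> qop \<Rightarrow> real" where
  "norm2 d n A = sqrt (Re (tr d n (mmul d n (adj A) A)) / real d ^ n)"

definition omega :: "nat \<Rightarrow> complex" where
  "omega d = cis (2 * pi / real d)"

text \<open>Single-qudit Weyl operator X^s Z^t: <k|X^s Z^t|j> = [k = j+s mod d] \<omega>^{t j}.\<close>
definition pauli1 :: "nat \<Rightarrow> nat \<times> nat \<Rightarrow> nat \<Rightarrow> nat \<Rightarrow> complex" where
  "pauli1 d a k j = (if k = (j + fst a) mod d then omega d ^ (snd a * j) else 0)"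

definition pauli :: "nat \<Rightarrow> nat \<Rightarrow> (nat \<Rightarrow> nat \<times> nat) \<Rightarrow> qop" where
  "pauli d n a = (\<lambda>k j. \<Prod>i<n. pauli1 d (a i) (k i) (j i))"

definition pvecs :: "nat \<Rightarrow> nat \<Rightarrow> (nat \<Rightarrow> nat \<times> nat) set" where
  "pvecs d n = {a. (\<forall>i<n. fst (a i) < d \<and> snd (a i) < d) \<and> (\<forall>i\<ge>n. a i = (0, 0))}"

definition weight :: "nat \<Rightarrow> (nat \<Rightarrow> nat \<times> nat) \<Rightarrow> nat" where
  "weight n a = card {i. i < n \<and> a i \<noteq> (0, 0)}"

definition pdist :: "nat \<Rightarrow> nat \<Rightarrow> qop \<Rightarrow> (nat \<Rightarrow> nat \<times> nat) \<Rightarrow> real" where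
  "pdist d n B a = (cmod (tr d n (mmul d n B (pauli d n a))))\<^sup>2 / real d ^ (2 * n)"

definition influence :: "nat \<Rightarrow> nat \<Rightarrow> qop \<Rightarrow> real" where
  "influence d n B = (\<Sum>a\<in>pvecs d n. real (weight n a) * pdist d n B a)"

definition CiS :: "nat \<Rightarrow> nat \<Rightarrow> qop \<Rightarrow> real" where
  "CiS d n U = Sup {\<bar>influence d n (mmul d n (mmul d n U B) (adj U)) - influence d n B\<bar>
                    | B. norm2 d n B = 1}"

text \<open>H acts nontrivially only on the qudits in S: H = h_S \<otimes> I_{rest}.\<close>
definition restr :: "nat set \<Rightarrow> (nat \<Rightarrow> nat) \<Rightarrow> (nat \<Rightarrow> nat)" where
  "restr S j = (\<lambda>i. if i \<in> S then j i else 0)"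

definition acts_only_on :: "nat \<Rightarrow> nat \<Rightarrow> nat set \<Rightarrow> qop \<Rightarrow> bool" where
  "acts_only_on d n S H \<longleftrightarrow> (\<exists>h :: qop. \<forall>k\<in>basis d n. \<forall>j\<in>basis d n.
      H k j = (if (\<forall>i<n. i \<notin> S \<longrightarrow> k i = j i) then h (restr S k) (restr S j) else 0))"

end

theory Submission
  imports Defs "HOL-Library.FuncSet"
begin

(* The influence is the sum over qudits i of the local influences I_i[O], the weight of the
   Weyl strings acting nontrivially on qudit i.  Conjugation by the unitary U_t preserves the
   norm, so it suffices to show I_i[U_t O U_t^dagger] = I_i[O] for i outside S: the change of
   the influence is then a sum of at most k differences of numbers in [0, 1].  By orthogonality
   of the single-qudit Weyl operators, the weight of the strings acting trivially on qudit i is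
   proportional to the sum of Tr(O^dagger P O P^dagger) over the d^2 Weyl operators P supported
   on qudit i.  Each such P commutes with H, hence with U_t, and every term is invariant. *)

lemma prod_if_else_zero:
  fixes c :: "'a::comm_semiring_1"
  shows "finite A \<Longrightarrow> (\<Prod>x\<in>A. if P x then c else 0) = (if \<forall>x\<in>A. P x then c ^ card A else 0)"
  by (induction A rule: finite_induct) auto

lemma prod_if_eq_point:
  fixes a b :: "'a::comm_monoid_mult"
  assumes "i < n"
  shows "(\<Prod>m<n. if m = i then a else b) = a * b ^ (n - 1)"
proof -
  have "(\<Prod>m<n. if m = i then a else b) = a * (\<Prod>m\<in>{..<n} - {i}. if m = i then a else b)"
    using assms by (subst prod.remove[of _ i]) auto
  also have "(\<Prod>m\<in>{..<n} - {i}. if m = i then a else b) = b ^ (n - 1)"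
    using assms by simp
  finally show ?thesis .
qed

lemma sum_sum_delta:
  assumes "finite S" "finite T" "a \<in> S" "b \<in> T"
  shows "(\<Sum>x\<in>S. \<Sum>y\<in>T. if x = a \<and> y = b then f x y else 0) = f a b"
proof -
  have "(\<Sum>x\<in>S. \<Sum>y\<in>T. if x = a \<and> y = b then f x y else 0)
      = (\<Sum>x\<in>S. if x = a then \<Sum>y\<in>T. if y = b then f x y else 0 else 0)"
    by (intro sum.cong refl) auto
  then show ?thesis using assms by simp
qed

lemma sum_reorder4:
  fixes f :: "'a \<Rightarrow> 'a \<Rightarrow> 'a \<Rightarrow> 'a \<Rightarrow> 'b::comm_monoid_add"
  shows "(\<Sum>a\<in>A. \<Sum>b\<in>A. \<Sum>c\<in>A. \<Sum>e\<in>A. f a b c e)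
       = (\<Sum>c\<in>A. \<Sum>e\<in>A. \<Sum>b\<in>A. \<Sum>a\<in>A. f a b c e)"
proof -
  have move: "(\<Sum>x\<in>A. \<Sum>y\<in>A. \<Sum>z\<in>A. g x y z) = (\<Sum>y\<in>A. \<Sum>z\<in>A. \<Sum>x\<in>A. g x y z)"
    for g :: "'a \<Rightarrow> 'a \<Rightarrow> 'a \<Rightarrow> 'b"
    by (subst sum.swap) (rule sum.cong[OF refl], rule sum.swap)
  have "(\<Sum>a\<in>A. \<Sum>b\<in>A. \<Sum>c\<in>A. \<Sum>e\<in>A. f a b c e)
      = (\<Sum>b\<in>A. \<Sum>c\<in>A. \<Sum>a\<in>A. \<Sum>e\<in>A. f a b c e)"
    by (rule move)
  also have "\<dots> = (\<Sum>b\<in>A. \<Sum>c\<in>A. \<Sum>e\<in>A. \<Sum>a\<in>A. f a b c e)"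
    by (rule sum.cong[OF refl], rule sum.cong[OF refl], rule sum.swap)
  also have "\<dots> = (\<Sum>c\<in>A. \<Sum>e\<in>A. \<Sum>b\<in>A. \<Sum>a\<in>A. f a b c e)"
    by (rule move)
  finally show ?thesis .
qed

(* Basis states and Weyl labels are functions on nat that are padded with a fixed value beyond n;
   PiE would pad with undefined instead. *)
definition Pi_pad :: "nat \<Rightarrow> (nat \<Rightarrow> 'a set) \<Rightarrow> 'a \<Rightarrow> (nat \<Rightarrow> 'a) set" where
  "Pi_pad n D z = {f. (\<forall>m<n. f m \<in> D m) \<and> (\<forall>m\<ge>n. f m = z)}"

lemma Pi_pad_eq_image_PiE:
  "Pi_pad n D z = (\<lambda>g m. if m < n then g m else z) ` PiE {..<n} D"
proof (intro set_eqI iffI)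
  fix f assume f: "f \<in> Pi_pad n D z"
  have "f = (\<lambda>m. if m < n then restrict f {..<n} m else z)"
    using f by (intro ext) (simp add: Pi_pad_def)
  moreover have "restrict f {..<n} \<in> PiE {..<n} D"
    using f by (simp add: Pi_pad_def)
  ultimately show "f \<in> (\<lambda>g m. if m < n then g m else z) ` PiE {..<n} D" by (rule image_eqI)
next
  fix f assume "f \<in> (\<lambda>g m. if m < n then g m else z) ` PiE {..<n} D"
  then obtain g where "g \<in> PiE {..<n} D" and "f = (\<lambda>m. if m < n then g m else z)"
    by blast
  then show "f \<in> Pi_pad n D z" by (simp add: Pi_pad_def PiE_mem)
qed

lemma inj_on_pad_PiE: "inj_on (\<lambda>g m. if m < n then g m else z) (PiE {..<n} D)"
proof (rule inj_onI)
  fix g h assume "g \<in> PiE {..<n} D" "h \<in> PiE {..<n} D"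
    and "(\<lambda>m. if m < n then g m else z) = (\<lambda>m. if m < n then h m else z)"
  then have "g i = h i" if "i < n" for i
    using that by (metis (mono_tags))
  then show "g = h" using \<open>g \<in> PiE {..<n} D\<close> \<open>h \<in> PiE {..<n} D\<close> by (intro PiE_ext) auto
qed

lemma finite_Pi_pad: "(\<And>m. m < n \<Longrightarrow> finite (D m)) \<Longrightarrow> finite (Pi_pad n D z)"
  unfolding Pi_pad_eq_image_PiE by (intro finite_imageI finite_PiE) auto

lemma card_Pi_pad: "card (Pi_pad n D z) = (\<Prod>m<n. card (D m))"
  unfolding Pi_pad_eq_image_PiE by (simp add: card_image[OF inj_on_pad_PiE] card_PiE)

lemma sum_prod_Pi_pad:
  fixes \<phi> :: "nat \<Rightarrow> 'a \<Rightarrow> 'b::comm_semiring_1"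
  assumes "\<And>m. m < n \<Longrightarrow> finite (D m)"
  shows "(\<Sum>f\<in>Pi_pad n D z. \<Prod>m<n. \<phi> m (f m)) = (\<Prod>m<n. \<Sum>x\<in>D m. \<phi> m x)"
proof -
  have "(\<Sum>f\<in>Pi_pad n D z. \<Prod>m<n. \<phi> m (f m)) = (\<Sum>g\<in>PiE {..<n} D. \<Prod>m<n. \<phi> m (g m))"
    unfolding Pi_pad_eq_image_PiE by (simp add: sum.reindex[OF inj_on_pad_PiE])
  also have "\<dots> = (\<Prod>m<n. \<Sum>x\<in>D m. \<phi> m x)"
    by (rule prod_sum_PiE[symmetric]) (use assms in auto)
  finally show ?thesis .
qed

section \<open>Basis states and Weyl labels\<close>

lemma basis_eq_Pi_pad: "basis d n = Pi_pad n (\<lambda>_. {..<d}) 0"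
  unfolding basis_def Pi_pad_def by auto

lemma finite_basis [simp]: "finite (basis d n)"
  unfolding basis_eq_Pi_pad by (rule finite_Pi_pad) auto

lemma card_basis: "card (basis d n) = d ^ n"
  by (simp add: basis_eq_Pi_pad card_Pi_pad)

lemma basis_less: "k \<in> basis d n \<Longrightarrow> m < n \<Longrightarrow> k m < d"
  unfolding basis_def by auto

lemma basis_eq_iff: "k \<in> basis d n \<Longrightarrow> j \<in> basis d n \<Longrightarrow> k = j \<longleftrightarrow> (\<forall>m<n. k m = j m)"
  unfolding basis_def by (auto intro!: ext) (metis not_le)

lemma basis_update: "k \<in> basis d n \<Longrightarrow> i < n \<Longrightarrow> x < d \<Longrightarrow> k(i := x) \<in> basis d n"
  unfolding basis_def by auto

definition weyl_labels :: "nat \<Rightarrow> (nat \<times> nat) set" where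
  "weyl_labels d = {..<d} \<times> {..<d}"

lemma finite_weyl_labels [simp]: "finite (weyl_labels d)"
  unfolding weyl_labels_def by simp

lemma pvecs_eq_Pi_pad: "pvecs d n = Pi_pad n (\<lambda>_. weyl_labels d) (0, 0)"
  unfolding pvecs_def Pi_pad_def weyl_labels_def by (auto simp: mem_Times_iff)

lemma finite_pvecs [simp]: "finite (pvecs d n)"
  unfolding pvecs_eq_Pi_pad by (rule finite_Pi_pad) simp

definition labels_trivial_at :: "nat \<Rightarrow> nat \<Rightarrow> nat \<Rightarrow> (nat \<times> nat) set" where
  "labels_trivial_at d i m = (if m = i then {(0, 0)} else weyl_labels d)"

definition labels_supported_at :: "nat \<Rightarrow> nat \<Rightarrow> nat \<Rightarrow> (nat \<times> nat) set" where
  "labels_supported_at d i m = (if m = i then weyl_labels d else {(0, 0)})"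

lemma finite_labels_trivial_at [simp]: "finite (labels_trivial_at d i m)"
  unfolding labels_trivial_at_def by simp

lemma finite_labels_supported_at [simp]: "finite (labels_supported_at d i m)"
  unfolding labels_supported_at_def by simp

lemma labels_supported_at_less:
  "b \<in> Pi_pad n (labels_supported_at d i) (0, 0) \<Longrightarrow> i < n \<Longrightarrow> fst (b i) < d \<and> snd (b i) < d"
  unfolding Pi_pad_def labels_supported_at_def weyl_labels_def by (auto simp: mem_Times_iff)

lemma Pi_pad_labels_trivial_at:
  assumes "0 < d" "i < n"
  shows "Pi_pad n (labels_trivial_at d i) (0, 0) = {a \<in> pvecs d n. a i = (0, 0)}"
  using assms unfolding Pi_pad_def pvecs_def labels_trivial_at_def weyl_labels_def
  by (auto simp: mem_Times_iff)

definition eq_on_basis :: "nat \<Rightarrow> nat \<Rightarrow> qop \<Rightarrow> qop \<Rightarrow> bool" where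
  "eq_on_basis d n A B \<longleftrightarrow> (\<forall>k\<in>basis d n. \<forall>j\<in>basis d n. A k j = B k j)"

lemma eq_on_basisD: "eq_on_basis d n A B \<Longrightarrow> k \<in> basis d n \<Longrightarrow> j \<in> basis d n \<Longrightarrow> A k j = B k j"
  unfolding eq_on_basis_def by blast

lemma eq_on_basis_refl [simp]: "eq_on_basis d n A A"
  unfolding eq_on_basis_def by blast

lemma eq_on_basis_sym: "eq_on_basis d n A B \<Longrightarrow> eq_on_basis d n B A"
  unfolding eq_on_basis_def by simp

lemma eq_on_basis_trans [trans]: "eq_on_basis d n A B \<Longrightarrow> eq_on_basis d n B C \<Longrightarrow> eq_on_basis d n A C"
  unfolding eq_on_basis_def by simp

lemma mmul_cong: "eq_on_basis d n A A' \<Longrightarrow> eq_on_basis d n B B' \<Longrightarrow>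
    eq_on_basis d n (mmul d n A B) (mmul d n A' B')"
  unfolding eq_on_basis_def mmul_def by (auto intro!: sum.cong)

lemma mmul_cong_left: "eq_on_basis d n A A' \<Longrightarrow> eq_on_basis d n (mmul d n A B) (mmul d n A' B)"
  by (rule mmul_cong[OF _ eq_on_basis_refl])

lemma mmul_cong_right: "eq_on_basis d n B B' \<Longrightarrow> eq_on_basis d n (mmul d n A B) (mmul d n A B')"
  by (rule mmul_cong[OF eq_on_basis_refl])

lemma adj_cong: "eq_on_basis d n A B \<Longrightarrow> eq_on_basis d n (adj A) (adj B)"
  unfolding eq_on_basis_def adj_def by simp

lemma tr_cong: "eq_on_basis d n A B \<Longrightarrow> tr d n A = tr d n B"
  unfolding eq_on_basis_def tr_def by simp

lemma mmul_assoc: "mmul d n (mmul d n A B) C = mmul d n A (mmul d n B C)"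
  unfolding mmul_def by (auto simp: sum_distrib_left sum_distrib_right mult.assoc intro!: ext sum.swap)

lemma mmul_idop_left: "eq_on_basis d n (mmul d n idop A) A"
  unfolding eq_on_basis_def mmul_def idop_def by (simp add: of_bool_def[symmetric])

lemma mmul_idop_right: "eq_on_basis d n (mmul d n A idop) A"
  unfolding eq_on_basis_def mmul_def idop_def by (simp add: of_bool_def[symmetric])

lemma mmul_cancel_left:
  assumes "eq_on_basis d n (mmul d n W U) idop"
  shows "eq_on_basis d n (mmul d n W (mmul d n U R)) R"
proof -
  have "eq_on_basis d n (mmul d n (mmul d n W U) R) (mmul d n idop R)"
    by (rule mmul_cong_left[OF assms])
  then show ?thesis
    unfolding mmul_assoc using mmul_idop_left eq_on_basis_trans by blast
qed

lemma mmul_scale_left: "mmul d n (\<lambda>k j. c * A k j) B = (\<lambda>k j. c * mmul d n A B k j)"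
  unfolding mmul_def by (simp add: sum_distrib_left mult.assoc)

lemma mmul_scale_right: "mmul d n A (\<lambda>k j. c * B k j) = (\<lambda>k j. c * mmul d n A B k j)"
  unfolding mmul_def by (simp add: sum_distrib_left mult.left_commute)

lemma adj_mmul: "adj (mmul d n A B) = mmul d n (adj B) (adj A)"
  unfolding adj_def mmul_def by (simp add: mult.commute)

lemma adj_adj [simp]: "adj (adj A) = A"
  unfolding adj_def by simp

lemma adj_idop [simp]: "adj idop = idop"
  unfolding adj_def idop_def by (intro ext) auto

lemma tr_mmul_commute: "tr d n (mmul d n A B) = tr d n (mmul d n B A)"
  unfolding tr_def mmul_def by (subst sum.swap) (simp add: mult.commute)

lemma tr_adj_mult_self: "tr d n (mmul d n (adj B) B) = of_real (\<Sum>k\<in>basis d n. \<Sum>j\<in>basis d n. (cmod (B k j))\<^sup>2)"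
  unfolding tr_def mmul_def adj_def of_real_sum complex_norm_square
  by (subst sum.swap) (simp add: mult.commute)

section \<open>The matrix exponential\<close>

lemma mpow_cong: "eq_on_basis d n A A' \<Longrightarrow> eq_on_basis d n (mpow d n A m) (mpow d n A' m)"
  by (induction m) (auto intro: mmul_cong)

lemma mpow_scale: "mpow d n (\<lambda>k j. c * A k j) m = (\<lambda>k j. c ^ m * mpow d n A m k j)"
  by (induction m) (auto simp: mmul_scale_left mmul_def sum_distrib_left mult_ac idop_def)

lemma mpow_add: "eq_on_basis d n (mmul d n (mpow d n A m) (mpow d n A p)) (mpow d n A (m + p))"
proof (induction m)
  case 0
  show ?case by (simp add: mmul_idop_left)
next
  case (Suc m)
  then show ?case by (simp add: mmul_assoc mmul_cong)
qed

lemma mpow_commute: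
  assumes "eq_on_basis d n (mmul d n A Q) (mmul d n Q A)"
  shows "eq_on_basis d n (mmul d n (mpow d n A m) Q) (mmul d n Q (mpow d n A m))"
proof (induction m)
  case 0
  show ?case using eq_on_basis_trans[OF mmul_idop_left eq_on_basis_sym[OF mmul_idop_right]] by simp
next
  case (Suc m)
  have "eq_on_basis d n (mmul d n A (mmul d n (mpow d n A m) Q)) (mmul d n A (mmul d n Q (mpow d n A m)))"
    by (rule mmul_cong_right[OF Suc.IH])
  also have "eq_on_basis d n \<dots> (mmul d n (mmul d n Q A) (mpow d n A m))"
    unfolding mmul_assoc[symmetric] by (rule mmul_cong_left[OF assms])
  finally show ?case by (simp add: mmul_assoc)
qed

lemma adj_mpow: "eq_on_basis d n (adj (mpow d n A m)) (mpow d n (adj A) m)"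
proof (induction m)
  case (Suc m)
  have "eq_on_basis d n (mmul d n (adj (mpow d n A m)) (adj A)) (mmul d n (mpow d n (adj A) m) (adj A))"
    by (rule mmul_cong_left[OF Suc.IH])
  also have "eq_on_basis d n \<dots> (mmul d n (adj A) (mpow d n (adj A) m))"
    by (rule mpow_commute) simp
  finally show ?case by (simp add: adj_mmul)
qed simp

lemma norm_mpow_le:
  assumes "k \<in> basis d n" "j \<in> basis d n"
  shows "cmod (mpow d n A m k j) \<le> (\<Sum>k\<in>basis d n. \<Sum>l\<in>basis d n. cmod (A k l)) ^ m"
  using assms
proof (induction m arbitrary: k j)
  case 0
  then show ?case by (simp add: idop_def)
next
  case (Suc m)
  define M where "M = (\<Sum>k\<in>basis d n. \<Sum>l\<in>basis d n. cmod (A k l))"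
  have row: "(\<Sum>l\<in>basis d n. cmod (A k l)) \<le> M"
    unfolding M_def by (rule member_le_sum[OF Suc.prems(1)]) (auto intro: sum_nonneg)
  have "cmod (mpow d n A (Suc m) k j) \<le> (\<Sum>l\<in>basis d n. cmod (A k l) * cmod (mpow d n A m l j))"
    by (simp add: mmul_def norm_mult[symmetric] norm_sum)
  also have "\<dots> \<le> (\<Sum>l\<in>basis d n. cmod (A k l) * M ^ m)"
    unfolding M_def by (intro sum_mono mult_left_mono Suc.IH Suc.prems) auto
  also have "\<dots> \<le> M * M ^ m"
    using row by (simp add: sum_distrib_right[symmetric] mult_right_mono M_def sum_nonneg)
  finally show ?case by (simp add: M_def)
qed

lemma summable_norm_mexp_series:
  assumes "k \<in> basis d n" "j \<in> basis d n"
  shows "summable (\<lambda>m. norm (mpow d n A m k j / of_nat (fact m)))"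
proof (rule summable_comparison_test'[OF summable_exp[of "\<Sum>k\<in>basis d n. \<Sum>l\<in>basis d n. cmod (A k l)"]])
  fix m
  show "norm (norm (mpow d n A m k j / of_nat (fact m)))
      \<le> inverse (fact m) * (\<Sum>k\<in>basis d n. \<Sum>l\<in>basis d n. cmod (A k l)) ^ m"
    using norm_mpow_le[OF assms, of A m] by (simp add: norm_divide divide_right_mono field_simps)
qed

lemma summable_mexp_series:
  "k \<in> basis d n \<Longrightarrow> j \<in> basis d n \<Longrightarrow> summable (\<lambda>m. mpow d n A m k j / of_nat (fact m))"
  by (rule summable_norm_cancel[OF summable_norm_mexp_series])

lemma sum_alternating_inverse_fact:
  "(\<Sum>i\<le>m. (-1) ^ i / (fact i * fact (m - i)) :: complex) = (if m = 0 then 1 else 0)"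
proof (cases "m = 0")
  case False
  have "(\<Sum>i\<le>m. (-1) ^ i / (fact i * fact (m - i)) :: complex)
      = (\<Sum>i\<le>m. (-1) ^ i * of_nat (m choose i)) / fact m"
    by (simp add: sum_divide_distrib binomial_fact)
  also have "\<dots> = 0" using False by (simp add: choose_alternating_sum)
  finally show ?thesis using False by simp
qed simp

lemma mexp_cauchy_coeff_neg:
  assumes "eq_on_basis d n B (\<lambda>k j. - A k j)" and k: "k \<in> basis d n" and j: "j \<in> basis d n"
  shows "(\<Sum>l\<in>basis d n. \<Sum>i\<le>m. mpow d n B i k l / of_nat (fact i) * (mpow d n A (m - i) l j / of_nat (fact (m - i))))
       = (if m = 0 then idop k j else 0)"
proof -
  have B_pow: "mpow d n B i k l = (-1) ^ i * mpow d n A i k l" if "l \<in> basis d n" for l i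
    using eq_on_basisD[OF mpow_cong[OF assms(1), of i] k that] mpow_scale[of d n "-1" A i] by simp
  have "(\<Sum>l\<in>basis d n. \<Sum>i\<le>m. mpow d n B i k l / of_nat (fact i) * (mpow d n A (m - i) l j / of_nat (fact (m - i))))
      = (\<Sum>i\<le>m. (-1) ^ i / (fact i * fact (m - i)) * mmul d n (mpow d n A i) (mpow d n A (m - i)) k j)"
    by (subst sum.swap, intro sum.cong refl)
       (simp add: B_pow mmul_def sum_distrib_left sum_divide_distrib mult.assoc)
  also have "\<dots> = (\<Sum>i\<le>m. (-1) ^ i / (fact i * fact (m - i))) * mpow d n A m k j"
    by (simp add: eq_on_basisD[OF mpow_add k j] sum_distrib_right)
  also have "\<dots> = (if m = 0 then idop k j else 0)"
    by (simp add: sum_alternating_inverse_fact)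
  finally show ?thesis .
qed

lemma mexp_neg_inverse:
  assumes "eq_on_basis d n B (\<lambda>k j. - A k j)"
  shows "eq_on_basis d n (mmul d n (mexp d n B) (mexp d n A)) idop"
  unfolding eq_on_basis_def
proof (intro ballI)
  fix k j assume k: "k \<in> basis d n" and j: "j \<in> basis d n"
  define b where "b l m = mpow d n B m k l / of_nat (fact m)" for l m
  define a where "a l m = mpow d n A m l j / of_nat (fact m)" for l m
  have sb: "summable (\<lambda>m. norm (b l m))" and sa: "summable (\<lambda>m. norm (a l m))"
    if "l \<in> basis d n" for l
    unfolding a_def b_def using summable_norm_mexp_series k j that by blast+
  have "mmul d n (mexp d n B) (mexp d n A) k j = (\<Sum>l\<in>basis d n. (\<Sum>m. b l m) * (\<Sum>m. a l m))"
    unfolding mmul_def mexp_def a_def b_def by simp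
  also have "\<dots> = (\<Sum>l\<in>basis d n. \<Sum>m. \<Sum>i\<le>m. b l i * a l (m - i))"
    by (intro sum.cong refl Cauchy_product sb sa)
  also have "\<dots> = (\<Sum>m. \<Sum>l\<in>basis d n. \<Sum>i\<le>m. b l i * a l (m - i))"
    by (rule suminf_sum[symmetric]) (intro summable_Cauchy_product sa sb)
  also have "\<dots> = idop k j"
    unfolding a_def b_def mexp_cauchy_coeff_neg[OF assms k j] by (subst suminf_finite[of "{0}"]) auto
  finally show "mmul d n (mexp d n B) (mexp d n A) k j = idop k j" .
qed

lemma mexp_commute:
  assumes "eq_on_basis d n (mmul d n A Q) (mmul d n Q A)"
  shows "eq_on_basis d n (mmul d n (mexp d n A) Q) (mmul d n Q (mexp d n A))"
  unfolding eq_on_basis_def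
proof (intro ballI)
  fix k j assume k: "k \<in> basis d n" and j: "j \<in> basis d n"
  have "mmul d n (mexp d n A) Q k j = (\<Sum>l\<in>basis d n. \<Sum>m. mpow d n A m k l / of_nat (fact m) * Q l j)"
    unfolding mmul_def mexp_def by (intro sum.cong refl suminf_mult2 summable_mexp_series k)
  also have "\<dots> = (\<Sum>m. \<Sum>l\<in>basis d n. mpow d n A m k l / of_nat (fact m) * Q l j)"
    by (rule suminf_sum[symmetric]) (intro summable_mult2 summable_mexp_series k)
  also have "\<dots> = (\<Sum>m. mmul d n (mpow d n A m) Q k j / of_nat (fact m))"
    by (simp add: mmul_def sum_divide_distrib mult_ac)
  also have "\<dots> = (\<Sum>m. mmul d n Q (mpow d n A m) k j / of_nat (fact m))"
    by (simp add: eq_on_basisD[OF mpow_commute[OF assms] k j])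
  also have "\<dots> = (\<Sum>m. \<Sum>l\<in>basis d n. Q k l * (mpow d n A m l j / of_nat (fact m)))"
    by (simp add: mmul_def sum_divide_distrib mult_ac)
  also have "\<dots> = (\<Sum>l\<in>basis d n. \<Sum>m. Q k l * (mpow d n A m l j / of_nat (fact m)))"
    by (rule suminf_sum) (intro summable_mult summable_mexp_series j)
  also have "\<dots> = mmul d n Q (mexp d n A) k j"
    unfolding mmul_def mexp_def by (intro sum.cong refl suminf_mult summable_mexp_series j)
  finally show "mmul d n (mexp d n A) Q k j = mmul d n Q (mexp d n A) k j" .
qed

lemma adj_mexp: "eq_on_basis d n (adj (mexp d n A)) (mexp d n (adj A))"
  unfolding eq_on_basis_def
proof (intro ballI)
  fix k j assume k: "k \<in> basis d n" and j: "j \<in> basis d n"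
  have "(\<lambda>m. cnj (mpow d n A m j k / of_nat (fact m))) sums cnj (mexp d n A j k)"
    unfolding mexp_def sums_cnj by (rule summable_sums[OF summable_mexp_series[OF j k]])
  moreover have "cnj (mpow d n A m j k / of_nat (fact m)) = mpow d n (adj A) m k j / of_nat (fact m)" for m
    using eq_on_basisD[OF adj_mpow k j] by (simp add: adj_def)
  ultimately show "adj (mexp d n A) k j = mexp d n (adj A) k j"
    by (simp add: adj_def mexp_def sums_iff)
qed

lemma unitary_evol:
  assumes "hermitian d n H"
  shows "eq_on_basis d n (mmul d n (adj (evol d n H t)) (evol d n H t)) idop"
proof -
  define A where "A = (\<lambda>k j. - (\<i> * complex_of_real t) * H k j)"
  have "eq_on_basis d n (adj A) (\<lambda>k j. - A k j)"
    unfolding eq_on_basis_def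
  proof (intro ballI)
    fix k j assume "k \<in> basis d n" "j \<in> basis d n"
    then have "H k j = cnj (H j k)" using assms unfolding hermitian_def by blast
    then show "adj A k j = - A k j" by (simp add: adj_def A_def)
  qed
  then have "eq_on_basis d n (mmul d n (mexp d n (adj A)) (mexp d n A)) idop"
    by (rule mexp_neg_inverse)
  then show ?thesis
    unfolding evol_def A_def[symmetric]
    by (rule eq_on_basis_trans[OF mmul_cong_left[OF adj_mexp]])
qed

lemma evol_commute:
  assumes "eq_on_basis d n (mmul d n H Q) (mmul d n Q H)"
  shows "eq_on_basis d n (mmul d n (evol d n H t) Q) (mmul d n Q (evol d n H t))"
  unfolding evol_def
  by (rule mexp_commute) (use assms in \<open>simp only: mmul_scale_left mmul_scale_right eq_on_basis_def, simp\<close>)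

section \<open>Weyl operators\<close>

lemma omega_power: "omega d ^ m = cis (2 * pi * real m / real d)"
  unfolding omega_def by (simp add: DeMoivre mult.commute)

lemma omega_power_eq_iff:
  assumes "b < d" "b' < d"
  shows "omega d ^ b = omega d ^ b' \<longleftrightarrow> b = b'"
  using bij_betw_imp_inj_on[OF bij_betw_roots_unity[of d]] assms
  by (auto simp: omega_power inj_on_def)

lemma omega_power_d: "0 < d \<Longrightarrow> omega d ^ d = 1"
  by (simp add: omega_power)

lemma cnj_omega_power_mult: "cnj (omega d) ^ b * omega d ^ b = 1"
proof -
  have "cnj (omega d) * omega d = 1" by (simp add: omega_def cis_cnj cis_mult)
  then show ?thesis by (simp add: power_mult_distrib[symmetric])
qed

lemma sum_omega_power_mult_cnj:
  assumes "b < d" "b' < d"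
  shows "(\<Sum>t<d. omega d ^ (t * b) * cnj (omega d ^ (t * b'))) = (if b = b' then of_nat d else 0)"
proof -
  define z where "z = omega d ^ b * cnj (omega d ^ b')"
  have "omega d ^ (t * b) * cnj (omega d ^ (t * b')) = z ^ t" for t
    unfolding z_def power_mult_distrib by (simp add: power_mult[symmetric] mult.commute)
  then have sum_eq: "(\<Sum>t<d. omega d ^ (t * b) * cnj (omega d ^ (t * b'))) = (\<Sum>t<d. z ^ t)"
    by simp
  show ?thesis
  proof (cases "b = b'")
    case True
    then have "z = 1" using cnj_omega_power_mult[of d b] by (simp add: z_def mult.commute)
    then show ?thesis using True sum_eq by simp
  next
    case False
    have "z \<noteq> 1"
    proof
      assume "z = 1"
      then have "omega d ^ b = omega d ^ b * (cnj (omega d ^ b') * omega d ^ b')"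
        by (simp add: cnj_omega_power_mult)
      also have "\<dots> = omega d ^ b'" using \<open>z = 1\<close> by (simp add: z_def mult.assoc[symmetric])
      finally show False using False omega_power_eq_iff assms by blast
    qed
    moreover have "z ^ d = 1"
    proof -
      have "z ^ d = (omega d ^ d) ^ b * cnj ((omega d ^ d) ^ b')"
        unfolding z_def power_mult_distrib by (simp add: power_mult[symmetric] mult.commute)
      then show ?thesis using assms omega_power_d[of d] by simp
    qed
    ultimately show ?thesis using False sum_eq by (simp add: geometric_sum)
  qed
qed

lemma shift_mod_iff:
  fixes a b s d :: nat
  assumes "a < d" "b < d" "s < d"
  shows "a = (b + s) mod d \<longleftrightarrow> s = (a + d - b) mod d"
proof (cases "b + s < d")
  case True
  then show ?thesis using assms by (auto simp: mod_if)
next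
  case False
  then show ?thesis using assms by (auto simp: mod_if)
qed

lemma pauli1_zero: "pauli1 d (0, 0) a b = (if a = b mod d then 1 else 0)"
  unfolding pauli1_def by simp

lemma pauli1_zero_basis: "k \<in> basis d n \<Longrightarrow> m < n \<Longrightarrow> pauli1 d (0, 0) j (k m) = (if j = k m then 1 else 0)"
  by (simp add: pauli1_zero basis_less)

lemma pauli1_orthogonal:
  assumes "a < d" "b < d" "a' < d" "b' < d"
  shows "(\<Sum>x\<in>weyl_labels d. pauli1 d x a b * cnj (pauli1 d x a' b'))
       = (if a = a' \<and> b = b' then of_nat d else 0)"
proof -
  have "(\<Sum>x\<in>weyl_labels d. pauli1 d x a b * cnj (pauli1 d x a' b'))
      = (\<Sum>s<d. if a = (b + s) mod d \<and> a' = (b' + s) mod d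
                 then (\<Sum>t<d. omega d ^ (t * b) * cnj (omega d ^ (t * b'))) else 0)"
    unfolding weyl_labels_def sum.cartesian_product'
    by (intro sum.cong refl) (auto simp: pauli1_def mult.commute)
  also have "\<dots> = (\<Sum>s<d. if a = (b + s) mod d \<and> a = a' \<and> b = b' then of_nat d else 0)"
    using sum_omega_power_mult_cnj[of b d b'] assms by (intro sum.cong refl) auto
  also have "\<dots> = (\<Sum>s<d. if s = (a + d - b) mod d \<and> a = a' \<and> b = b' then of_nat d else 0)"
    using assms by (intro sum.cong refl) (auto simp: shift_mod_iff)
  also have "\<dots> = (if a = a' \<and> b = b' then of_nat d else 0)"
    using assms by (auto simp: sum.delta)
  finally show ?thesis .
qed

lemma pauli_supported_at:
  assumes i: "i < n" and b: "b \<in> Pi_pad n (labels_supported_at d i) (0, 0)"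
    and l: "l \<in> basis d n" and j: "j \<in> basis d n"
  shows "pauli d n b l j = (if l = j(i := (j i + fst (b i)) mod d) then omega d ^ (snd (b i) * j i) else 0)"
proof -
  have b0: "b m = (0, 0)" if "m < n" "m \<noteq> i" for m
    using b that unfolding Pi_pad_def labels_supported_at_def by auto
  have "pauli d n b l j = pauli1 d (b i) (l i) (j i) * (\<Prod>m\<in>{..<n} - {i}. pauli1 d (b m) (l m) (j m))"
    unfolding pauli_def using i by (subst prod.remove[of _ i]) auto
  also have "(\<Prod>m\<in>{..<n} - {i}. pauli1 d (b m) (l m) (j m)) = (\<Prod>m\<in>{..<n} - {i}. if l m = j m then 1 else 0)"
    using j by (intro prod.cong refl) (auto simp: b0 pauli1_zero_basis)
  also have "\<dots> = (if \<forall>m\<in>{..<n} - {i}. l m = j m then 1 else 0)"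
    by (simp add: prod_if_else_zero)
  also have "(\<forall>m\<in>{..<n} - {i}. l m = j m) \<and> l i = (j i + fst (b i)) mod d
      \<longleftrightarrow> l = j(i := (j i + fst (b i)) mod d)"
  proof -
    have "0 < d" using basis_less[OF j i] by simp
    then have "j(i := (j i + fst (b i)) mod d) \<in> basis d n"
      by (intro basis_update j i) simp
    then show ?thesis using i by (auto simp: basis_eq_iff[OF l])
  qed
  ultimately show ?thesis by (auto simp: pauli1_def)
qed

lemma pauli_supported_at_row:
  assumes i: "i < n" and b: "b \<in> Pi_pad n (labels_supported_at d i) (0, 0)"
    and k: "k \<in> basis d n" and l: "l \<in> basis d n"
  defines "k' \<equiv> k(i := (k i + d - fst (b i)) mod d)"
  shows "pauli d n b k l = (if l = k' then omega d ^ (snd (b i) * k' i) else 0)"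
proof -
  have "k i = (fst (b i) + l i) mod d \<longleftrightarrow> l i = (k i + d - fst (b i)) mod d"
    using shift_mod_iff basis_less[OF k i] basis_less[OF l i] labels_supported_at_less[OF b i] by blast
  then have "k = l(i := (l i + fst (b i)) mod d) \<longleftrightarrow> l = k'"
    unfolding k'_def fun_eq_iff by (auto simp: add.commute)
  then show ?thesis
    by (auto simp: pauli_supported_at[OF i b k l] k'_def)
qed

section \<open>Parseval and the twirl identity\<close>

definition weyl_kernel ::
  "nat \<Rightarrow> nat \<Rightarrow> (nat \<Rightarrow> (nat \<times> nat) set) \<Rightarrow>
    (nat \<Rightarrow> nat) \<Rightarrow> (nat \<Rightarrow> nat) \<Rightarrow> (nat \<Rightarrow> nat) \<Rightarrow> (nat \<Rightarrow> nat) \<Rightarrow> complex"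
  where "weyl_kernel d n D u v u' v' = (\<Sum>a\<in>Pi_pad n D (0, 0). pauli d n a u v * cnj (pauli d n a u' v'))"

lemma weyl_kernel_eq_prod:
  assumes "\<And>m. m < n \<Longrightarrow> finite (D m)"
  shows "weyl_kernel d n D u v u' v'
       = (\<Prod>m<n. \<Sum>x\<in>D m. pauli1 d x (u m) (v m) * cnj (pauli1 d x (u' m) (v' m)))"
  unfolding weyl_kernel_def pauli_def
  using sum_prod_Pi_pad[where \<phi> = "\<lambda>m x. pauli1 d x (u m) (v m) * cnj (pauli1 d x (u' m) (v' m))", OF assms]
  by (simp add: prod.distrib[symmetric])

lemma weyl_kernel_full:
  assumes "u \<in> basis d n" "v \<in> basis d n" "u' \<in> basis d n" "v' \<in> basis d n"
  shows "weyl_kernel d n (\<lambda>_. weyl_labels d) u v u' v' = (if u = u' \<and> v = v' then of_nat d ^ n else 0)"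
proof -
  have "weyl_kernel d n (\<lambda>_. weyl_labels d) u v u' v'
      = (\<Prod>m<n. if u m = u' m \<and> v m = v' m then of_nat d else 0)"
    unfolding weyl_kernel_eq_prod[OF finite_weyl_labels]
    using assms by (intro prod.cong refl pauli1_orthogonal) (auto intro: basis_less)
  also have "\<dots> = (if u = u' \<and> v = v' then of_nat d ^ n else 0)"
    using assms by (auto simp: prod_if_else_zero basis_eq_iff)
  finally show ?thesis .
qed

(* On qudit i one kernel sums over (0, 0) only and the other over all d^2 labels, elsewhere the
   other way round; orthogonality turns both into the same product of Kronecker deltas. *)
lemma weyl_kernel_trivial_supported:
  assumes i: "i < n"
    and k: "k \<in> basis d n" and j: "j \<in> basis d n" and k': "k' \<in> basis d n" and j': "j' \<in> basis d n"
  shows "of_nat d * weyl_kernel d n (labels_trivial_at d i) j k j' k'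
       = of_nat d ^ (n - 1) * weyl_kernel d n (labels_supported_at d i) k' k j' j"
proof -
  define h :: "nat \<Rightarrow> complex" where
    "h m = (if m = i then of_bool (j m = k m \<and> j' m = k' m) else of_bool (j m = j' m \<and> k m = k' m))" for m
  have "(\<Sum>x\<in>labels_trivial_at d i m. pauli1 d x (j m) (k m) * cnj (pauli1 d x (j' m) (k' m)))
      = (if m = i then 1 else of_nat d) * h m" if "m < n" for m
    using that k j k' j' by (auto simp: labels_trivial_at_def h_def pauli1_zero_basis pauli1_orthogonal basis_less)
  then have trivial: "weyl_kernel d n (labels_trivial_at d i) j k j' k' = of_nat d ^ (n - 1) * (\<Prod>m<n. h m)"
    by (simp add: weyl_kernel_eq_prod labels_trivial_at_def prod.distrib prod_if_eq_point[OF i])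
  have "(\<Sum>x\<in>labels_supported_at d i m. pauli1 d x (k' m) (k m) * cnj (pauli1 d x (j' m) (j m)))
      = (if m = i then of_nat d else 1) * h m" if "m < n" for m
    using that k j k' j' by (auto simp: labels_supported_at_def h_def pauli1_zero_basis pauli1_orthogonal basis_less)
  then have supported: "weyl_kernel d n (labels_supported_at d i) k' k j' j = of_nat d * (\<Prod>m<n. h m)"
    by (simp add: weyl_kernel_eq_prod labels_supported_at_def prod.distrib prod_if_eq_point[OF i])
  show ?thesis unfolding trivial supported by (simp add: mult_ac)
qed

(* The orders of summation below are the ones produced by unfolding; sum_reorder4 matches them. *)
lemma sum_tr_pauli_mult_cnj:
  assumes "\<And>m. m < n \<Longrightarrow> finite (D m)"
  shows "(\<Sum>a\<in>Pi_pad n D (0, 0). tr d n (mmul d n B (pauli d n a)) * cnj (tr d n (mmul d n B (pauli d n a))))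
    = (\<Sum>k'\<in>basis d n. \<Sum>k\<in>basis d n. \<Sum>j'\<in>basis d n. \<Sum>j\<in>basis d n.
        B k j * cnj (B k' j') * weyl_kernel d n D j k j' k')"
  unfolding weyl_kernel_def tr_def mmul_def
  by (simp add: sum_product sum_distrib_left cnj_sum sum.swap[where A = "Pi_pad n D (0, 0)"] mult_ac
       finite_Pi_pad assms)

definition twirl_trace :: "nat \<Rightarrow> nat \<Rightarrow> qop \<Rightarrow> qop \<Rightarrow> complex" where
  "twirl_trace d n B P = tr d n (mmul d n (mmul d n (mmul d n (adj B) P) B) (adj P))"

lemma sum_twirl_trace:
  assumes "\<And>m. m < n \<Longrightarrow> finite (D m)"
  shows "(\<Sum>a\<in>Pi_pad n D (0, 0). twirl_trace d n B (pauli d n a))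
    = (\<Sum>j'\<in>basis d n. \<Sum>j\<in>basis d n. \<Sum>k\<in>basis d n. \<Sum>k'\<in>basis d n.
        B k j * cnj (B k' j') * weyl_kernel d n D k' k j' j)"
  unfolding twirl_trace_def weyl_kernel_def tr_def mmul_def adj_def
  by (simp add: sum_distrib_left sum_distrib_right sum.swap[where A = "Pi_pad n D (0, 0)"] mult_ac
       finite_Pi_pad assms)

lemma sum_pdist_eq_norm2_sq:
  assumes "0 < d"
  shows "(\<Sum>a\<in>pvecs d n. pdist d n B a) = (norm2 d n B)\<^sup>2"
proof -
  have "complex_of_real (\<Sum>a\<in>pvecs d n. (cmod (tr d n (mmul d n B (pauli d n a))))\<^sup>2)
      = (\<Sum>k'\<in>basis d n. \<Sum>k\<in>basis d n. \<Sum>j'\<in>basis d n. \<Sum>j\<in>basis d n.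
          B k j * cnj (B k' j') * weyl_kernel d n (\<lambda>_. weyl_labels d) j k j' k')"
    unfolding pvecs_eq_Pi_pad of_real_sum complex_norm_square by (rule sum_tr_pauli_mult_cnj) simp
  also have "\<dots> = (\<Sum>k'\<in>basis d n. \<Sum>j'\<in>basis d n. \<Sum>k\<in>basis d n. \<Sum>j\<in>basis d n.
          if k = k' \<and> j = j' then of_nat d ^ n * (B k j * cnj (B k j)) else 0)"
    by (rule sum.cong[OF refl], rule trans[OF sum.swap], intro sum.cong refl) (simp add: weyl_kernel_full)
  also have "\<dots> = of_real (real d ^ n * (\<Sum>k\<in>basis d n. \<Sum>j\<in>basis d n. (cmod (B k j))\<^sup>2))"
    unfolding of_real_mult of_real_sum complex_norm_square sum_distrib_left
    by (intro sum.cong refl) (simp add: sum_sum_delta)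
  finally have "(\<Sum>a\<in>pvecs d n. (cmod (tr d n (mmul d n B (pauli d n a))))\<^sup>2)
      = real d ^ n * (\<Sum>k\<in>basis d n. \<Sum>j\<in>basis d n. (cmod (B k j))\<^sup>2)"
    by (simp only: of_real_eq_iff)
  moreover have "(norm2 d n B)\<^sup>2 = (\<Sum>k\<in>basis d n. \<Sum>j\<in>basis d n. (cmod (B k j))\<^sup>2) / real d ^ n"
    unfolding norm2_def tr_adj_mult_self by (simp add: sum_nonneg)
  ultimately show ?thesis
    using assms by (simp add: pdist_def sum_divide_distrib[symmetric] power_mult_distrib power2_eq_square mult_2 power_add)
qed

lemma sum_trivial_at_eq_twirl:
  assumes "i < n"
  shows "of_nat d * (\<Sum>a\<in>Pi_pad n (labels_trivial_at d i) (0, 0).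
            tr d n (mmul d n B (pauli d n a)) * cnj (tr d n (mmul d n B (pauli d n a))))
       = of_nat d ^ (n - 1) * (\<Sum>b\<in>Pi_pad n (labels_supported_at d i) (0, 0). twirl_trace d n B (pauli d n b))"
proof -
  have "of_nat d * (\<Sum>a\<in>Pi_pad n (labels_trivial_at d i) (0, 0).
            tr d n (mmul d n B (pauli d n a)) * cnj (tr d n (mmul d n B (pauli d n a))))
      = (\<Sum>k'\<in>basis d n. \<Sum>k\<in>basis d n. \<Sum>j'\<in>basis d n. \<Sum>j\<in>basis d n.
          B k j * cnj (B k' j') * (of_nat d * weyl_kernel d n (labels_trivial_at d i) j k j' k'))"
    by (simp add: sum_tr_pauli_mult_cnj sum_distrib_left mult_ac)
  also have "\<dots> = (\<Sum>k'\<in>basis d n. \<Sum>k\<in>basis d n. \<Sum>j'\<in>basis d n. \<Sum>j\<in>basis d n.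
          B k j * cnj (B k' j') * (of_nat d ^ (n - 1) * weyl_kernel d n (labels_supported_at d i) k' k j' j))"
    using assms by (intro sum.cong refl) (simp add: weyl_kernel_trivial_supported)
  also have "\<dots> = of_nat d ^ (n - 1) * (\<Sum>j'\<in>basis d n. \<Sum>j\<in>basis d n. \<Sum>k\<in>basis d n. \<Sum>k'\<in>basis d n.
          B k j * cnj (B k' j') * weyl_kernel d n (labels_supported_at d i) k' k j' j)"
    by (subst sum_reorder4) (simp add: sum_distrib_left mult_ac)
  also have "\<dots> = of_nat d ^ (n - 1) * (\<Sum>b\<in>Pi_pad n (labels_supported_at d i) (0, 0). twirl_trace d n B (pauli d n b))"
    by (simp add: sum_twirl_trace)
  finally show ?thesis .
qed

lemma sum_pdist_trivial_at_eq_twirl: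
  assumes d: "0 < d" and i: "i < n"
  shows "complex_of_real (\<Sum>a\<in>Pi_pad n (labels_trivial_at d i) (0, 0). pdist d n B a)
       = (\<Sum>b\<in>Pi_pad n (labels_supported_at d i) (0, 0). twirl_trace d n B (pauli d n b)) / of_nat d ^ (n + 2)"
proof -
  obtain m where n: "n = Suc m" using i by (cases n) auto
  have "complex_of_real (\<Sum>a\<in>Pi_pad n (labels_trivial_at d i) (0, 0). pdist d n B a)
      = (\<Sum>a\<in>Pi_pad n (labels_trivial_at d i) (0, 0).
            tr d n (mmul d n B (pauli d n a)) * cnj (tr d n (mmul d n B (pauli d n a)))) / of_nat d ^ (2 * n)"
    unfolding pdist_def of_real_sum of_real_divide complex_norm_square by (simp add: sum_divide_distrib)
  also have "\<dots> = (\<Sum>b\<in>Pi_pad n (labels_supported_at d i) (0, 0). twirl_trace d n B (pauli d n b))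
      * of_nat d ^ (n - 1) / (of_nat d * of_nat d ^ (2 * n))"
    using d sum_trivial_at_eq_twirl[OF i, of d B] by (simp add: field_simps)
  also have "\<dots> = (\<Sum>b\<in>Pi_pad n (labels_supported_at d i) (0, 0). twirl_trace d n B (pauli d n b)) / of_nat d ^ (n + 2)"
    using d by (simp add: n field_simps power_add power_mult power2_eq_square)
  finally show ?thesis .
qed

section \<open>Conjugation by the evolution\<close>

lemma twirl_trace_conj_unitary:
  assumes unitary: "eq_on_basis d n (mmul d n (adj U) U) idop"
    and commute: "eq_on_basis d n (mmul d n U P) (mmul d n P U)"
  shows "twirl_trace d n (mmul d n (mmul d n U B) (adj U)) P = twirl_trace d n B P"
proof -
  let ?W = "adj U" and ?Q = "adj P"
  have cancel: "eq_on_basis d n (mmul d n ?W (mmul d n P (mmul d n U R))) (mmul d n P R)" for R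
  proof -
    have "eq_on_basis d n (mmul d n ?W (mmul d n (mmul d n P U) R)) (mmul d n ?W (mmul d n (mmul d n U P) R))"
      by (intro mmul_cong_right mmul_cong_left eq_on_basis_sym[OF commute])
    then show ?thesis
      unfolding mmul_assoc using mmul_cancel_left[OF unitary] eq_on_basis_trans by blast
  qed
  then have "twirl_trace d n (mmul d n (mmul d n U B) ?W) P
      = tr d n (mmul d n U (mmul d n (adj B) (mmul d n P (mmul d n B (mmul d n ?W ?Q)))))"
    unfolding twirl_trace_def mmul_assoc adj_mmul adj_adj by (intro tr_cong mmul_cong_right cancel)
  also have "\<dots> = tr d n (mmul d n (adj B) (mmul d n P (mmul d n B (mmul d n (mmul d n ?W ?Q) U))))"
    by (subst tr_mmul_commute) (simp add: mmul_assoc)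
  also have "\<dots> = tr d n (mmul d n (adj B) (mmul d n P (mmul d n B (mmul d n ?Q (mmul d n ?W U)))))"
  proof -
    have "eq_on_basis d n (mmul d n (mmul d n ?W ?Q) U) (mmul d n ?Q (mmul d n ?W U))"
      using mmul_cong_left[OF eq_on_basis_sym[OF adj_cong[OF commute]], of U]
      by (simp add: adj_mmul mmul_assoc)
    then show ?thesis by (intro tr_cong mmul_cong_right)
  qed
  also have "\<dots> = twirl_trace d n B P"
    unfolding twirl_trace_def mmul_assoc
    by (intro tr_cong mmul_cong_right eq_on_basis_trans[OF mmul_cong_right[OF unitary] mmul_idop_right])
  finally show ?thesis .
qed

lemma twirl_trace_idop: "twirl_trace d n B idop = tr d n (mmul d n (adj B) B)"
  unfolding twirl_trace_def adj_idop
  by (intro tr_cong eq_on_basis_trans[OF mmul_idop_right mmul_cong_left[OF mmul_idop_right]])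

lemma norm2_conj_unitary:
  assumes "eq_on_basis d n (mmul d n (adj U) U) idop"
  shows "norm2 d n (mmul d n (mmul d n U B) (adj U)) = norm2 d n B"
proof -
  have "eq_on_basis d n (mmul d n U idop) (mmul d n idop U)"
    by (rule eq_on_basis_trans[OF mmul_idop_right eq_on_basis_sym[OF mmul_idop_left]])
  then show ?thesis
    unfolding norm2_def twirl_trace_idop[symmetric] by (simp only: twirl_trace_conj_unitary[OF assms])
qed

lemma norm2_idop:
  assumes "0 < d"
  shows "norm2 d n idop = 1"
proof -
  have "(\<Sum>k\<in>basis d n. \<Sum>j\<in>basis d n. (cmod (idop k j))\<^sup>2) = (\<Sum>k\<in>basis d n. 1)"
    by (intro sum.cong refl) (simp add: idop_def if_distrib[of "\<lambda>z. (cmod z)\<^sup>2"] cong: if_cong)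
  then show ?thesis
    unfolding norm2_def tr_adj_mult_self using assms by (simp add: card_basis)
qed

lemma acts_only_on_offdiag:
  assumes "acts_only_on d n S H" "i < n" "i \<notin> S" "k \<in> basis d n" "j \<in> basis d n" "k i \<noteq> j i"
  shows "H k j = 0"
  using assms unfolding acts_only_on_def by force

lemma acts_only_on_update:
  assumes H: "acts_only_on d n S H" and i: "i < n" "i \<notin> S" and k: "k \<in> basis d n" and j: "j \<in> basis d n"
    and x: "x < d" and eq: "k i = j i"
  shows "H (k(i := x)) (j(i := x)) = H k j"
proof -
  obtain h where h: "\<And>k j. k \<in> basis d n \<Longrightarrow> j \<in> basis d n \<Longrightarrow>
      H k j = (if \<forall>m<n. m \<notin> S \<longrightarrow> k m = j m then h (restr S k) (restr S j) else 0)"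
    using H unfolding acts_only_on_def by blast
  have restr: "restr S (f(i := x)) = restr S f" for f
    using i unfolding restr_def by (intro ext) auto
  have cond: "(\<forall>m<n. m \<notin> S \<longrightarrow> (k(i := x)) m = (j(i := x)) m)
      \<longleftrightarrow> (\<forall>m<n. m \<notin> S \<longrightarrow> k m = j m)"
    using eq by auto
  show ?thesis
    by (simp only: h[OF k j] h[OF basis_update[OF k i(1) x] basis_update[OF j i(1) x]] restr cond)
qed

(* P_b shifts digit i and multiplies by a phase depending on digit i only, whereas H vanishes
   unless digit i is unchanged and does not depend on its value. *)
lemma acts_only_on_commute_pauli:
  assumes H: "acts_only_on d n S H" and i: "i < n" "i \<notin> S"
    and b: "b \<in> Pi_pad n (labels_supported_at d i) (0, 0)"
  shows "eq_on_basis d n (mmul d n H (pauli d n b)) (mmul d n (pauli d n b) H)"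
  unfolding eq_on_basis_def
proof (intro ballI)
  fix k j assume k: "k \<in> basis d n" and j: "j \<in> basis d n"
  define s t where "s = fst (b i)" and "t = snd (b i)"
  have "s < d" using labels_supported_at_less[OF b i(1)] by (simp add: s_def)
  have ki: "k i < d" and ji: "j i < d" using basis_less k j i by blast+
  define j' k' where "j' = j(i := (j i + s) mod d)" and "k' = k(i := (k i + d - s) mod d)"
  have j': "j' \<in> basis d n" and k': "k' \<in> basis d n"
    using ji by (auto simp: j'_def k'_def intro!: basis_update k j i)
  have left: "mmul d n H (pauli d n b) k j = H k j' * omega d ^ (t * j i)"
    using j' unfolding mmul_def
    by (simp add: pauli_supported_at[OF i(1) b _ j] j'_def s_def t_def
        if_distrib[of "times x" for x] cong: if_cong)
  have right: "mmul d n (pauli d n b) H k j = omega d ^ (t * k' i) * H k' j"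
    using k' unfolding mmul_def
    by (simp add: pauli_supported_at_row[OF i(1) b k] k'_def s_def t_def
        if_distrib[of "\<lambda>y. y * x" for x] cong: if_cong)
  have shift: "k i = j' i \<longleftrightarrow> k' i = j i"
    using shift_mod_iff[OF ki \<open>s < d\<close> ji] by (auto simp: j'_def k'_def add.commute)
  show "mmul d n H (pauli d n b) k j = mmul d n (pauli d n b) H k j"
  proof (cases "k i = j' i")
    case True
    then have "H k j' = H k' j"
      using acts_only_on_update[OF H i k j' ji] shift by (simp add: j'_def k'_def)
    then show ?thesis
      unfolding left right using True shift by (simp add: mult.commute)
  next
    case False
    then show ?thesis
      unfolding left right using shift acts_only_on_offdiag[OF H i] k j k' j' by simp
  qed
qed

section \<open>Local influences\<close>

definition local_influence :: "nat \<Rightarrow> nat \<Rightarrow> nat \<Rightarrow> qop \<Rightarrow> real" where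
  "local_influence d n i B = (\<Sum>a\<in>{a \<in> pvecs d n. a i \<noteq> (0, 0)}. pdist d n B a)"

lemma influence_eq_sum_local_influence: "influence d n B = (\<Sum>i<n. local_influence d n i B)"
proof -
  have "real (weight n a) = (\<Sum>i<n. of_bool (a i \<noteq> (0, 0)))" for a
    unfolding weight_def by (simp add: Int_def conj_commute)
  then have "influence d n B = (\<Sum>i<n. \<Sum>a\<in>pvecs d n. of_bool (a i \<noteq> (0, 0)) * pdist d n B a)"
    unfolding influence_def by (subst sum.swap) (simp add: sum_distrib_right)
  then show ?thesis
    unfolding local_influence_def by (simp add: sum.inter_filter[symmetric] Int_def)
qed

lemma local_influence_eq_diff:
  assumes "0 < d" "i < n"
  shows "local_influence d n i B
       = (norm2 d n B)\<^sup>2 - (\<Sum>a\<in>Pi_pad n (labels_trivial_at d i) (0, 0). pdist d n B a)"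
proof -
  have "{a \<in> pvecs d n. a i \<noteq> (0, 0)} = pvecs d n - {a \<in> pvecs d n. a i = (0, 0)}" by auto
  then show ?thesis
    unfolding local_influence_def Pi_pad_labels_trivial_at[OF assms] sum_pdist_eq_norm2_sq[OF assms(1), symmetric]
    by (simp add: sum_diff)
qed

lemma local_influence_bounds:
  assumes "0 < d"
  shows "0 \<le> local_influence d n i B" "local_influence d n i B \<le> (norm2 d n B)\<^sup>2"
  unfolding local_influence_def sum_pdist_eq_norm2_sq[OF assms, symmetric]
  by (auto simp: pdist_def intro!: sum_nonneg sum_mono2)

lemma local_influence_conj_evol_notin:
  assumes d: "0 < d" and herm: "hermitian d n H" and H: "acts_only_on d n S H" and i: "i < n" "i \<notin> S"
  shows "local_influence d n i (mmul d n (mmul d n (evol d n H t) B) (adj (evol d n H t)))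
       = local_influence d n i B"
proof -
  let ?U = "evol d n H t" and ?T = "Pi_pad n (labels_trivial_at d i) (0, 0)"
  let ?B' = "mmul d n (mmul d n ?U B) (adj ?U)"
  have "twirl_trace d n ?B' (pauli d n b) = twirl_trace d n B (pauli d n b)"
    if "b \<in> Pi_pad n (labels_supported_at d i) (0, 0)" for b
    by (intro twirl_trace_conj_unitary unitary_evol herm evol_commute acts_only_on_commute_pauli[OF H i that])
  then have "complex_of_real (\<Sum>a\<in>?T. pdist d n ?B' a) = complex_of_real (\<Sum>a\<in>?T. pdist d n B a)"
    unfolding sum_pdist_trivial_at_eq_twirl[OF d i(1)] by simp
  then have "(\<Sum>a\<in>?T. pdist d n ?B' a) = (\<Sum>a\<in>?T. pdist d n B a)"
    by (simp only: of_real_eq_iff)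
  then show ?thesis
    unfolding local_influence_eq_diff[OF d i(1)] norm2_conj_unitary[OF unitary_evol[OF herm]] by simp
qed

lemma abs_influence_diff_le_card:
  assumes d: "0 < d" and S: "S \<subseteq> {..<n}" and B: "norm2 d n B = 1" and B': "norm2 d n B' = 1"
    and outside: "\<And>i. i < n \<Longrightarrow> i \<notin> S \<Longrightarrow> local_influence d n i B' = local_influence d n i B"
  shows "\<bar>influence d n B' - influence d n B\<bar> \<le> real (card S)"
proof -
  have "influence d n B' - influence d n B = (\<Sum>i<n. local_influence d n i B' - local_influence d n i B)"
    unfolding influence_eq_sum_local_influence sum_subtractf ..
  also have "\<dots> = (\<Sum>i\<in>S. local_influence d n i B' - local_influence d n i B)"
    using S outside by (intro sum.mono_neutral_right) auto
  finally have "\<bar>influence d n B' - influence d n B\<bar>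
      \<le> (\<Sum>i\<in>S. \<bar>local_influence d n i B' - local_influence d n i B\<bar>)"
    by (simp add: sum_abs)
  also have "\<dots> \<le> (\<Sum>i\<in>S. 1)"
  proof (rule sum_mono)
    fix i
    show "\<bar>local_influence d n i B' - local_influence d n i B\<bar> \<le> 1"
      using local_influence_bounds[OF d, of n i B] local_influence_bounds[OF d, of n i B'] B B'
      by (auto simp: abs_le_iff)
  qed
  finally show ?thesis by simp
qed

lemma CiS_le:
  assumes "0 < d"
    and "\<And>B. norm2 d n B = 1 \<Longrightarrow> \<bar>influence d n (mmul d n (mmul d n U B) (adj U)) - influence d n B\<bar> \<le> c"
  shows "CiS d n U \<le> c"
  unfolding CiS_def using norm2_idop[OF assms(1)] assms(2) by (intro cSup_least) auto

theorem mainTheorem10: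
  fixes d n k :: nat and H :: qop and S :: "nat set" and t :: real
  assumes "d \<ge> 2" and "n \<ge> 1"
    and "hermitian d n H"
    and "S \<subseteq> {..<n}" and "card S = k"
    and "acts_only_on d n S H"
  shows "CiS d n (evol d n H t) \<le> real k"
proof (rule CiS_le)
  show d: "0 < d" using assms(1) by simp
  fix B assume B: "norm2 d n B = 1"
  have unitary: "eq_on_basis d n (mmul d n (adj (evol d n H t)) (evol d n H t)) idop"
    by (rule unitary_evol[OF assms(3)])
  show "\<bar>influence d n (mmul d n (mmul d n (evol d n H t) B) (adj (evol d n H t))) - influence d n B\<bar> \<le> real k"
    unfolding assms(5)[symmetric]
  proof (rule abs_influence_diff_le_card[OF d assms(4) B])
    show "norm2 d n (mmul d n (mmul d n (evol d n H t) B) (adj (evol d n H t))) = 1"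
      using B norm2_conj_unitary[OF unitary] by simp
  qed (rule local_influence_conj_evol_notin[OF d assms(3,6)])
qed

end
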